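(* In the curved-exam game described in the context, let $BR_i(x_{-i}):=\arg\max_{x_i\in[0,1]}U_i(x_i,x_{-i})$ and $$C(x_{-i}):=\Big\{0,\ \alpha_i-(1-\alpha_i)\Big(\tfrac{nm}{n-1}-\bar x_{-i}\Big),\ \alpha_i\Big\}\cap[0,1].$$ Then $$BR_i(x_{-i})=\begin{cases}\{\alpha_i\} & \text{if } \frac{nm}{n-1}<\bar x_{-i}\le 1,\\[2pt] \arg\max_{x_i\in C(x_{-i})}U_i(x_i,x_{-i}) & \text{if } \frac{nm-1}{n-1}\le \bar x_{-i}\le\frac{nm}{n-1},\\[2pt] \{\alpha_i-(1-\alpha_i)(\frac{nm}{n-1}-\bar x_{-i})\} & \text{if } \frac{nm}{n-1}-\frac{\alpha_i}{1-\alpha_i}\le\bar x_{-i}<\frac{nm-1}{n-1},\\[2pt] \{0\} & \text{if } 0\le \bar x_{-i}\le \frac{nm}{n-1}-\frac{\alpha_i}{1-\alpha_i}.\end{cases}$$ (Whenever $\bar x_{-i}$ lies in one of the stated sets, $BR_i(x_{-i})$ is as given; some of these sets may be empty.)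
   Context: The curved-exam game: fix $n\ge2$, abilities $\alpha_1,\dots,\alpha_n\in(0,1)$, target mean $m\in(0,1)$. Student $i$ chooses $x_i\in[0,1]$; $x_{-i}=(x_j)_{j\ne i}$; $\bar x=\frac1n\sum_j x_j$, $\bar x_{-i}=\frac1{n-1}\sum_{j\ne i}x_j$. Grade $G_i(x)=x_i+\max(m-\bar x,0)=\max\big(m+\frac{n-1}{n}(x_i-\bar x_{-i}),x_i\big)$ (not truncated at 1); payoff $U_i(x)=G_i(x)^{\alpha_i}(1-x_i)^{1-\alpha_i}$. *)

theory Defs
  imports Complex_Main
begin

text \<open>Players are indexed by 0..<n; a strategy profile is x :: nat => real.\<close>

definition xbar :: "nat \<Rightarrow> (nat \<Rightarrow> real) \<Rightarrow> real" where
  "xbar n x = (\<Sum>j<n. x j) / real n"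

definition xbar_minus :: "nat \<Rightarrow> (nat \<Rightarrow> real) \<Rightarrow> nat \<Rightarrow> real" where
  "xbar_minus n x i = (\<Sum>j\<in>{..<n} - {i}. x j) / (real n - 1)"

definition grade :: "nat \<Rightarrow> real \<Rightarrow> (nat \<Rightarrow> real) \<Rightarrow> nat \<Rightarrow> real" where
  "grade n m x i = x i + max (m - xbar n x) 0"

definition payoff :: "nat \<Rightarrow> (nat \<Rightarrow> real) \<Rightarrow> real \<Rightarrow> (nat \<Rightarrow> real) \<Rightarrow> nat \<Rightarrow> real" where
  "payoff n alpha m x i = grade n m x i powr alpha i * (1 - x i) powr (1 - alpha i)"

definition argmax_on :: "real set \<Rightarrow> (real \<Rightarrow> real) \<Rightarrow> real set" where
  "argmax_on S f = {t \<in> S. \<forall>s\<in>S. f s \<le> f t}"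

definition BR :: "nat \<Rightarrow> (nat \<Rightarrow> real) \<Rightarrow> real \<Rightarrow> (nat \<Rightarrow> real) \<Rightarrow> nat \<Rightarrow> real set" where
  "BR n alpha m x i = argmax_on {0..1} (\<lambda>t. payoff n alpha m (x(i := t)) i)"

definition candC :: "nat \<Rightarrow> (nat \<Rightarrow> real) \<Rightarrow> real \<Rightarrow> (nat \<Rightarrow> real) \<Rightarrow> nat \<Rightarrow> real set" where
  "candC n alpha m x i =
     {0, alpha i - (1 - alpha i) * (real n * m / (real n - 1) - xbar_minus n x i), alpha i} \<inter> {0..1}"

end

theory Submission
  imports Defs
begin

(* Put k = (n - 1) / n and s = xbar_{-i} - n m / (n - 1). Player i's grade for the score t is
   max (k (t - s)) t, so for s <= 0 the payoff is the maximum of the two Cobb-Douglas functions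
   k^a (t - s)^a (1 - t)^(1 - a) and t^a (1 - t)^(1 - a). These are strictly unimodal on [0, 1],
   with peaks max 0 (a + (1 - a) s) and a, so every best response is one of these two peaks, both of
   which lie in C. If moreover the curve still binds at t = a, the curved peak beats a and is the
   unique best response; if s > 0 the curve never binds and a is. *)

lemma argmax_on_eq_singleton:
  assumes "t0 \<in> S" "\<And>t. t \<in> S \<Longrightarrow> t \<noteq> t0 \<Longrightarrow> f t < f t0"
  shows "argmax_on S f = {t0}"
  using assms unfolding argmax_on_def by (force simp: less_imp_le)

lemma argmax_on_eq_on_dominating_subset:
  assumes "C \<subseteq> S" "\<And>t. t \<in> S - C \<Longrightarrow> \<exists>c\<in>C. f t < f c"
  shows "argmax_on S f = argmax_on C f"
proof (intro equalityI subsetI)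
  fix t assume t: "t \<in> argmax_on S f"
  have "t \<in> C"
  proof (rule ccontr)
    assume "t \<notin> C"
    with t have "t \<in> S - C" by (simp add: argmax_on_def)
    then obtain c where "c \<in> C" "f t < f c" using assms(2) by blast
    moreover have "f c \<le> f t" using t \<open>c \<in> C\<close> assms(1) by (auto simp: argmax_on_def)
    ultimately show False by simp
  qed
  with t assms(1) show "t \<in> argmax_on C f" by (auto simp: argmax_on_def)
next
  fix t assume t: "t \<in> argmax_on C f"
  have "f r \<le> f t" if r: "r \<in> S" for r
  proof (cases "r \<in> C")
    case True
    with t show ?thesis by (simp add: argmax_on_def)
  next
    case False
    with r obtain c where "c \<in> C" "f r < f c" using assms(2) by blast
    moreover have "f c \<le> f t" using t \<open>c \<in> C\<close> by (simp add: argmax_on_def)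
    ultimately show ?thesis by simp
  qed
  with t assms(1) show "t \<in> argmax_on S f" by (auto simp: argmax_on_def)
qed

lemma argmax_on_max_of_unique_maxima:
  assumes "{p, q} \<subseteq> C" "C \<subseteq> S"
    and "\<And>t. t \<in> S \<Longrightarrow> f t = max (g t) (h t)"
    and "\<And>t. t \<in> S \<Longrightarrow> t \<noteq> p \<Longrightarrow> g t < g p"
    and "\<And>t. t \<in> S \<Longrightarrow> t \<noteq> q \<Longrightarrow> h t < h q"
  shows "argmax_on S f = argmax_on C f"
proof (rule argmax_on_eq_on_dominating_subset[OF \<open>C \<subseteq> S\<close>])
  fix t assume "t \<in> S - C"
  then have "t \<in> S" "t \<noteq> p" "t \<noteq> q" using assms(1) by auto
  then have "g t < g p" "h t < h q" "f t = max (g t) (h t)" using assms(3-5) by auto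
  then have "f t < max (g p) (h q)" by linarith
  moreover have "p \<in> S" "q \<in> S" using assms(1,2) by auto
  then have "g p \<le> f p" "h q \<le> f q" using assms(3) by auto
  ultimately have "f t < f p \<or> f t < f q" by linarith
  then show "\<exists>c\<in>C. f t < f c" using assms(1) by auto
qed

definition cobb_douglas :: "real \<Rightarrow> real \<Rightarrow> real \<Rightarrow> real" where
  "cobb_douglas a s t = (t - s) powr a * (1 - t) powr (1 - a)"

lemma cobb_douglas_eq_exp_ln:
  assumes "s < t" "t < 1"
  shows "cobb_douglas a s t = exp (a * ln (t - s) + (1 - a) * ln (1 - t))"
  using assms by (simp add: cobb_douglas_def powr_def exp_add)

lemma ln_cobb_douglas_has_derivative:
  assumes "s < t" "t < 1"
  shows "((\<lambda>t. a * ln (t - s) + (1 - a) * ln (1 - t)) has_real_derivative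
           (a + (1 - a) * s - t) / ((t - s) * (1 - t))) (at t)"
  using assms by (auto intro!: derivative_eq_intros simp: divide_simps; simp add: algebra_simps)

lemma cobb_douglas_strict_mono:
  assumes "0 < a" "a < 1" "s \<le> u" "u < v" "v \<le> a + (1 - a) * s"
  shows "cobb_douglas a s u < cobb_douglas a s v"
proof -
  have "a + (1 - a) * s = s + a * (1 - s)" by (simp add: algebra_simps)
  with assms have "0 < a * (1 - s)" by linarith
  with assms have "s < 1" by (simp add: zero_less_mult_iff)
  have "a + (1 - a) * s = 1 - (1 - a) * (1 - s)" by (simp add: algebra_simps)
  moreover have "0 < (1 - a) * (1 - s)" using assms \<open>s < 1\<close> by simp
  ultimately have "v < 1" "s < v" using assms by linarith+
  show ?thesis
  proof (cases "u = s")
    case True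
    then show ?thesis using \<open>v < 1\<close> \<open>s < v\<close> by (simp add: cobb_douglas_def)
  next
    case False
    let ?L = "\<lambda>t. a * ln (t - s) + (1 - a) * ln (1 - t)"
    have "?L u < ?L v"
    proof (rule DERIV_pos_imp_increasing_open[OF \<open>u < v\<close>])
      fix t assume "u < t" "t < v"
      with assms False \<open>v < 1\<close> have "s < t" "t < 1" "0 < (a + (1 - a) * s - t) / ((t - s) * (1 - t))"
        by auto
      then show "\<exists>y. (?L has_real_derivative y) (at t) \<and> 0 < y"
        using ln_cobb_douglas_has_derivative by blast
    next
      show "continuous_on {u..v} ?L"
        using assms False \<open>v < 1\<close> by (intro continuous_intros) auto
    qed
    then show ?thesis using assms False \<open>v < 1\<close> by (simp add: cobb_douglas_eq_exp_ln)
  qed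
qed

lemma cobb_douglas_strict_antimono:
  assumes "0 < a" "s < 1" "a + (1 - a) * s \<le> u" "u < v" "v \<le> 1"
  shows "cobb_douglas a s v < cobb_douglas a s u"
proof -
  have "a + (1 - a) * s = s + a * (1 - s)" by (simp add: algebra_simps)
  moreover have "0 < a * (1 - s)" using assms by simp
  ultimately have "s < u" using assms by linarith
  show ?thesis
  proof (cases "v = 1")
    case True
    then show ?thesis using \<open>s < u\<close> \<open>u < v\<close> by (simp add: cobb_douglas_def)
  next
    case False
    let ?L = "\<lambda>t. a * ln (t - s) + (1 - a) * ln (1 - t)"
    have "?L v < ?L u"
    proof (rule DERIV_neg_imp_decreasing_open[OF \<open>u < v\<close>])
      fix t assume "u < t" "t < v"
      with assms False \<open>s < u\<close> have "s < t" "t < 1" "(a + (1 - a) * s - t) / ((t - s) * (1 - t)) < 0"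
        by (auto intro!: divide_neg_pos)
      then show "\<exists>y. (?L has_real_derivative y) (at t) \<and> y < 0"
        using ln_cobb_douglas_has_derivative by blast
    next
      show "continuous_on {u..v} ?L"
        using assms False \<open>s < u\<close> by (intro continuous_intros) auto
    qed
    then show ?thesis using assms False \<open>s < u\<close> by (simp add: cobb_douglas_eq_exp_ln)
  qed
qed

lemma cobb_douglas_less_clamped_peak:
  assumes "0 < a" "a < 1" "s \<le> 0" "t \<in> {0..1}" "t \<noteq> max 0 (a + (1 - a) * s)"
  shows "cobb_douglas a s t < cobb_douglas a s (max 0 (a + (1 - a) * s))"
proof (cases "t < max 0 (a + (1 - a) * s)")
  case True
  with assms show ?thesis by (intro cobb_douglas_strict_mono) auto
next
  case False
  with assms show ?thesis by (intro cobb_douglas_strict_antimono) auto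
qed

lemma cobb_douglas_less_peak:
  assumes "0 < a" "a < 1" "t \<in> {0..1}" "t \<noteq> a"
  shows "cobb_douglas a 0 t < cobb_douglas a 0 a"
  using cobb_douglas_less_clamped_peak[of a 0 t] assms by simp


definition curved_utility :: "real \<Rightarrow> real \<Rightarrow> real \<Rightarrow> real \<Rightarrow> real" where
  "curved_utility a k s t = max (k * (t - s)) t powr a * (1 - t) powr (1 - a)"

lemma curved_utility_eq_max:
  assumes "0 < a" "0 < k" "s \<le> 0" "0 \<le> t"
  shows "curved_utility a k s t = max (k powr a * cobb_douglas a s t) (cobb_douglas a 0 t)"
proof -
  have "max (k * (t - s)) t powr a = max ((k * (t - s)) powr a) (t powr a)"
    using assms by (cases "k * (t - s) \<le> t") (simp_all add: max_absorb1 max_absorb2 powr_mono2)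
  then show ?thesis
    using assms by (simp add: curved_utility_def cobb_douglas_def powr_mult max_mult_distrib_right)
qed

lemma curved_utility_argmax_on_superset_of_peaks:
  assumes "0 < a" "a < 1" "0 < k" "s \<le> 0"
    and "{max 0 (a + (1 - a) * s), a} \<subseteq> C" "C \<subseteq> {0..1}"
  shows "argmax_on {0..1} (curved_utility a k s) = argmax_on C (curved_utility a k s)"
proof (rule argmax_on_max_of_unique_maxima[OF assms(5,6)])
  fix t :: real assume t: "t \<in> {0..1}"
  with assms show "curved_utility a k s t = max (k powr a * cobb_douglas a s t) (cobb_douglas a 0 t)"
    by (simp add: curved_utility_eq_max)
  show "k powr a * cobb_douglas a s t < k powr a * cobb_douglas a s (max 0 (a + (1 - a) * s))"
    if "t \<noteq> max 0 (a + (1 - a) * s)"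
    using cobb_douglas_less_clamped_peak[of a s t] assms t that by simp
  show "cobb_douglas a 0 t < cobb_douglas a 0 a" if "t \<noteq> a"
    using cobb_douglas_less_peak assms t that by blast
qed

lemma curved_utility_argmax_on_candidates:
  assumes "0 < a" "a < 1" "0 < k" "s \<le> 0"
  shows "argmax_on {0..1} (curved_utility a k s) =
    argmax_on ({0, a + (1 - a) * s, a} \<inter> {0..1}) (curved_utility a k s)"
proof (rule curved_utility_argmax_on_superset_of_peaks[OF assms])
  have "(1 - a) * s \<le> 0" using assms by (simp add: mult_nonneg_nonpos)
  then show "{max 0 (a + (1 - a) * s), a} \<subseteq> {0, a + (1 - a) * s, a} \<inter> {0..1}"
    using assms by (auto simp: max_def)
qed simp

lemma curved_utility_argmax_on_clamped_peak:
  assumes "0 < a" "a < 1" "0 < k" "s < 0" "a \<le> k * (a - s)"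
  shows "argmax_on {0..1} (curved_utility a k s) = {max 0 (a + (1 - a) * s)}"
proof -
  define c where "c = max 0 (a + (1 - a) * s)"
  have "(1 - a) * s < 0" using assms by (simp add: mult_pos_neg)
  then have c: "0 \<le> c" "c < a" using assms by (auto simp: c_def)
  have "argmax_on {0..1} (curved_utility a k s) = argmax_on {c, a} (curved_utility a k s)"
    using assms c unfolding c_def by (intro curved_utility_argmax_on_superset_of_peaks) auto
  also have "\<dots> = {c}"
  proof (rule argmax_on_eq_singleton)
    have "curved_utility a k s a = k powr a * cobb_douglas a s a"
      using assms by (simp add: curved_utility_def cobb_douglas_def max_absorb1 powr_mult)
    also have "\<dots> < k powr a * cobb_douglas a s c"
      using cobb_douglas_less_clamped_peak[of a s a] assms c unfolding c_def by simp
    also have "\<dots> \<le> curved_utility a k s c"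
      using assms c by (simp add: curved_utility_eq_max)
    finally show "t \<in> {c, a} \<Longrightarrow> t \<noteq> c \<Longrightarrow> curved_utility a k s t < curved_utility a k s c" for t
      by auto
  qed simp
  finally show ?thesis unfolding c_def .
qed

lemma curved_utility_argmax_on_interior_peak:
  assumes "0 < a" "a < 1" "0 < k" "k \<le> 1" "- a / (1 - a) \<le> s" "s < - (1 - k) / k"
  shows "argmax_on {0..1} (curved_utility a k s) = {a + (1 - a) * s}"
proof -
  have "k * s < - (1 - k)" using assms(3,6) by (metis pos_less_divide_eq mult.commute)
  moreover have "0 \<le> (1 - k) * (1 - a)" using assms(2,4) by simp
  ultimately have "a \<le> k * (a - s)" by (simp add: algebra_simps)
  have "- (1 - k) / k \<le> 0" using assms(3,4) by (simp add: divide_nonpos_pos)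
  with assms(6) have "s < 0" by linarith
  have "- a \<le> s * (1 - a)" using assms(2,5) by (metis pos_divide_le_eq diff_gt_0_iff_gt)
  then have "0 \<le> a + (1 - a) * s" by (simp add: algebra_simps)
  then show ?thesis
    using curved_utility_argmax_on_clamped_peak[of a k s] assms(1-3) \<open>s < 0\<close> \<open>a \<le> k * (a - s)\<close>
    by (simp add: max_absorb2)
qed

lemma curved_utility_argmax_on_corner:
  assumes "0 < a" "a < 1" "1 / 2 \<le> k" "s \<le> - a / (1 - a)"
  shows "argmax_on {0..1} (curved_utility a k s) = {0}"
proof -
  have "s * (1 - a) \<le> - a" using pos_le_divide_eq[of "1 - a" s "- a"] assms by simp
  then have "a \<le> (1 - a) * - s" by (simp add: algebra_simps)
  then have "s < 0" using assms by (smt (verit) mult_nonneg_nonpos)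
  then have "(1 - a) * - s \<le> - s" using assms by (intro mult_left_le_one_le) auto
  with \<open>a \<le> (1 - a) * - s\<close> have "a \<le> - s" by linarith
  then have "a \<le> (a - s) / 2" by simp
  also have "\<dots> \<le> k * (a - s)" using assms \<open>s < 0\<close> mult_right_mono[of "1 / 2" k "a - s"] by simp
  finally have "a \<le> k * (a - s)" .
  moreover have "a + (1 - a) * s \<le> 0" using \<open>a \<le> (1 - a) * - s\<close> by simp
  ultimately show ?thesis using curved_utility_argmax_on_clamped_peak assms \<open>s < 0\<close> by simp
qed

lemma curved_utility_argmax_on_uncurved:
  assumes "0 < a" "a < 1" "0 < k" "k \<le> 1" "0 < s"
  shows "argmax_on {0..1} (curved_utility a k s) = {a}"
proof (rule argmax_on_eq_singleton)
  show "a \<in> {0..1}" using assms by simp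
  fix t :: real assume t: "t \<in> {0..1}" "t \<noteq> a"
  have "curved_utility a k s r = cobb_douglas a 0 r" if "0 \<le> r" for r
  proof -
    have "k * r \<le> r" "0 < k * s" using assms that by (simp_all add: mult_left_le_one_le)
    then have "k * (r - s) \<le> r" unfolding right_diff_distrib by linarith
    then show ?thesis by (simp add: curved_utility_def cobb_douglas_def max_absorb2)
  qed
  then show "curved_utility a k s t < curved_utility a k s a"
    using cobb_douglas_less_peak assms t by simp
qed

lemma xbar_fun_upd:
  assumes "2 \<le> n" "i < n"
  shows "xbar n (x(i := t)) = (t + (real n - 1) * xbar_minus n x i) / real n"
proof -
  have "(\<Sum>j<n. (x(i := t)) j) = t + (\<Sum>j\<in>{..<n} - {i}. x j)"
    using assms by (simp add: sum.remove[of "{..<n}" i])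
  also have "(\<Sum>j\<in>{..<n} - {i}. x j) = (real n - 1) * xbar_minus n x i"
    using assms by (simp add: xbar_minus_def)
  finally show ?thesis by (simp add: xbar_def)
qed

lemma grade_fun_upd:
  assumes "2 \<le> n" "i < n"
  shows "grade n m (x(i := t)) i = max (m + (real n - 1) / real n * (t - xbar_minus n x i)) t"
proof -
  have "t + (m - xbar n (x(i := t))) = m + (real n - 1) / real n * (t - xbar_minus n x i)"
    using assms by (simp add: xbar_fun_upd field_simps)
  then show ?thesis by (simp add: grade_def max_add_distrib_right)
qed

lemma payoff_fun_upd:
  assumes "2 \<le> n" "i < n"
  shows "payoff n alpha m (x(i := t)) i =
    curved_utility (alpha i) ((real n - 1) / real n) (xbar_minus n x i - real n * m / (real n - 1)) t"
proof -
  have "m + (real n - 1) / real n * (t - xbar_minus n x i)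
      = (real n - 1) / real n * (t - (xbar_minus n x i - real n * m / (real n - 1)))"
    using assms by (simp add: field_simps)
  then show ?thesis by (simp add: payoff_def curved_utility_def grade_fun_upd assms)
qed

theorem mainTheorem6:
  fixes n :: nat and alpha :: "nat \<Rightarrow> real" and m :: real and x :: "nat \<Rightarrow> real" and i :: nat
  assumes "n \<ge> 2"
    and "\<forall>j<n. 0 < alpha j \<and> alpha j < 1"
    and "0 < m" and "m < 1"
    and "i < n"
    and "\<forall>j<n. j \<noteq> i \<longrightarrow> 0 \<le> x j \<and> x j \<le> 1"
  shows "(real n * m / (real n - 1) < xbar_minus n x i \<and> xbar_minus n x i \<le> 1 \<longrightarrow>
            BR n alpha m x i = {alpha i})
       \<and> ((real n * m - 1) / (real n - 1) \<le> xbar_minus n x i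
            \<and> xbar_minus n x i \<le> real n * m / (real n - 1) \<longrightarrow>
            BR n alpha m x i = argmax_on (candC n alpha m x i) (\<lambda>t. payoff n alpha m (x(i := t)) i))
       \<and> (real n * m / (real n - 1) - alpha i / (1 - alpha i) \<le> xbar_minus n x i
            \<and> xbar_minus n x i < (real n * m - 1) / (real n - 1) \<longrightarrow>
            BR n alpha m x i = {alpha i - (1 - alpha i) * (real n * m / (real n - 1) - xbar_minus n x i)})
       \<and> (0 \<le> xbar_minus n x i
            \<and> xbar_minus n x i \<le> real n * m / (real n - 1) - alpha i / (1 - alpha i) \<longrightarrow>
            BR n alpha m x i = {0})"
proof -
  define a k y P where "a = alpha i" and "k = (real n - 1) / real n" and "y = xbar_minus n x i"
    and "P = real n * m / (real n - 1)"
  have a: "0 < a" "a < 1" using assms(2,5) by (auto simp: a_def)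
  have n: "real n \<ge> 2" using assms(1) by simp
  then have k: "0 < k" "1 / 2 \<le> k" "k \<le> 1" by (auto simp: k_def field_simps)
  have BR: "BR n alpha m x i = argmax_on {0..1} (curved_utility a k (y - P))"
    and U: "(\<lambda>t. payoff n alpha m (x(i := t)) i) = curved_utility a k (y - P)"
    using assms(1,5) by (simp_all add: BR_def payoff_fun_upd a_def k_def y_def P_def)
  have "(1 - k) / k = 1 / (real n - 1)"
    using n by (simp add: k_def divide_simps)
  then have kink: "(real n * m - 1) / (real n - 1) = P - (1 - k) / k"
    by (simp add: P_def diff_divide_distrib)
  have peak: "a - (1 - a) * (P - y) = a + (1 - a) * (y - P)"
    by (simp add: algebra_simps)
  show ?thesis
    unfolding BR U candC_def kink peak y_def[symmetric] a_def[symmetric] P_def[symmetric]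
  proof (intro conjI impI)
    assume "P < y \<and> y \<le> 1"
    then show "argmax_on {0..1} (curved_utility a k (y - P)) = {a}"
      using curved_utility_argmax_on_uncurved a k by simp
  next
    assume "P - (1 - k) / k \<le> y \<and> y \<le> P"
    then show "argmax_on {0..1} (curved_utility a k (y - P)) =
      argmax_on ({0, a + (1 - a) * (y - P), a} \<inter> {0..1}) (curved_utility a k (y - P))"
      using curved_utility_argmax_on_candidates a k by simp
  next
    assume "P - a / (1 - a) \<le> y \<and> y < P - (1 - k) / k"
    then show "argmax_on {0..1} (curved_utility a k (y - P)) = {a + (1 - a) * (y - P)}"
      using curved_utility_argmax_on_interior_peak[of a k "y - P"] a k by (simp add: diff_divide_distrib)
  next
    assume "0 \<le> y \<and> y \<le> P - a / (1 - a)"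
    then show "argmax_on {0..1} (curved_utility a k (y - P)) = {0}"
      using curved_utility_argmax_on_corner[of a k "y - P"] a k by simp
  qed
qed

end
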